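(* For every smooth $\mathfrak{g}$-valued section $\varphi$ of $\Lambda^2_+\mathbb{R}^8$ on $\mathbb{R}^8$, \[\mathbb{L}_B\mathbb{L}_B^*\varphi = \nabla_B^*\nabla_B\varphi - 2\sum_{k,l=1}^4 e_k^\perp \wedge [F_B(e_k^\perp,e_l^\perp), i_{e_l^\perp}\varphi].\]
   Context: Write $\mathbb{R}^8 = E \oplus E^\perp$ with orthonormal basis $e_1,\dots,e_4$ of $E$ and $e_1^\perp,\dots,e_4^\perp$ of $E^\perp$; vectors are identified with covectors via the Euclidean metric; coordinates $(x,y)$, $x\in E$, $y=\sum_k y_k e_k^\perp$. The $4$-form $\Omega$ is $\Omega = -e_1 e_2 e_1^\perp e_2^\perp - e_1 e_2 e_3^\perp e_4^\perp - e_3 e_4 e_1^\perp e_2^\perp - e_3 e_4 e_3^\perp e_4^\perp + e_1 e_3 e_2^\perp e_4^\perp - e_1 e_3 e_1^\perp e_3^\perp - e_2 e_4 e_2^\perp e_4^\perp + e_2 e_4 e_1^\perp e_3^\perp - e_1 e_4 e_2^\perp e_3^\perp - e_1 e_4 e_1^\perp e_4^\perp - e_2 e_3 e_2^\perp e_3^\perp - e_2 e_3 e_1^\perp e_4^\perp + e_1 e_2 e_3 e_4 + e_1^\perp e_2^\perp e_3^\perp e_4^\perp$ (juxtaposition = wedge). With $*$ the Euclidean Hodge star (orientation $e_1\wedge\dots\wedge e_4\wedge e_1^\perp\wedge\dots\wedge e_4^\perp$), $\Lambda^2_+\mathbb{R}^8 = \{\varphi: 3\varphi - *(\Omega\wedge\varphi)=0\}$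 and $P_+\varphi=\frac14(\varphi+*(\Omega\wedge\varphi))$ is the projection onto it. $\mathfrak{g}\subset\mathfrak{so}(E^\perp)$ is spanned by $\mathfrak{i},\mathfrak{j},\mathfrak{k}$ with $\mathfrak{i}(e_1^\perp)=-e_2^\perp, \mathfrak{i}(e_2^\perp)=e_1^\perp, \mathfrak{i}(e_3^\perp)=e_4^\perp, \mathfrak{i}(e_4^\perp)=-e_3^\perp$; $\mathfrak{j}(e_1^\perp)=-e_3^\perp, \mathfrak{j}(e_2^\perp)=-e_4^\perp, \mathfrak{j}(e_3^\perp)=e_1^\perp, \mathfrak{j}(e_4^\perp)=e_2^\perp$; $\mathfrak{k}(e_1^\perp)=-e_4^\perp, \mathfrak{k}(e_2^\perp)=e_3^\perp, \mathfrak{k}(e_3^\perp)=-e_2^\perp, \mathfrak{k}(e_4^\perp)=e_1^\perp$; fix an $\mathrm{ad}$-invariant inner product on $\mathfrak{g}$. Fix $\varepsilon>0$; $B$ is the $\mathfrak{g}$-valued $1$-form with $B(e_i)=0$ ($1\le i\le4$), $B(e_1^\perp)=\frac{-y_2\mathfrak{i}-y_3\mathfrak{j}-y_4\mathfrak{k}}{\varepsilon^2+|y|^2}$, $B(e_2^\perp)=\frac{y_1\mathfrak{i}-y_4\mathfrak{j}+y_3\mathfrak{k}}{\varepsilon^2+|y|^2}$, $B(e_3^\perp)=\frac{y_4\mathfrak{i}+y_1\mathfrak{j}-y_2\mathfrak{k}}{\varepsilon^2+|y|^2}$, $B(e_4^\perp)=\frac{-y_3\mathfrak{i}+y_2\mathfrak{j}+y_1\mathfrak{k}}{\varepsilon^2+|y|^2}$.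 On $\mathfrak{g}$-valued forms, $D_B\omega = d\omega + [B\wedge\omega]$ is the exterior covariant derivative, $D_B^*$ its formal $L^2$-adjoint, $F_B=dB+\frac12[B\wedge B]$ the curvature, $\nabla_B$ the covariant derivative induced by the flat Euclidean connection and $\mathrm{ad}(B)$, and $\nabla_B^*\nabla_B$ the associated rough Laplacian. The linearized operator is $\mathbb{L}_B a = 2P_+D_Ba$ (from $\mathfrak{g}$-valued $1$-forms to $\mathfrak{g}$-valued sections of $\Lambda^2_+$), and $\mathbb{L}_B^*\varphi = 2D_B^*\varphi$. *)

theory Defs
  imports "HOL-Analysis.Analysis"
begin

text \<open>Basis of R^8 = E + E-perp: E1..E4 are e_1..e_4, P1..P4 are e_1-perp..e_4-perp.
  The order E1 < ... < E4 < P1 < ... < P4 is the orientation order.\<close>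

datatype ix = E1 | E2 | E3 | E4 | P1 | P2 | P3 | P4

lemma UNIV_ix: "(UNIV :: ix set) = {E1, E2, E3, E4, P1, P2, P3, P4}"
  using ix.exhaust by auto

instance ix :: finite
  by standard (simp add: UNIV_ix)

text \<open>Index type for the orthonormal basis e_1-perp..e_4-perp of E-perp,
  on which the Lie algebra g (a subalgebra of so(E-perp)) acts.\<close>

datatype iq = Q1 | Q2 | Q3 | Q4

lemma UNIV_iq: "(UNIV :: iq set) = {Q1, Q2, Q3, Q4}"
  using iq.exhaust by auto

instance iq :: finite
  by standard (simp add: UNIV_iq)

fun rank :: "ix \<Rightarrow> nat" where
  "rank E1 = 0" | "rank E2 = 1" | "rank E3 = 2" | "rank E4 = 3"
| "rank P1 = 4" | "rank P2 = 5" | "rank P3 = 6" | "rank P4 = 7"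

text \<open>A (possibly vector-valued) form at a point is represented by its coefficients:
  \<open>\<alpha> S\<close> is the coefficient of e_S = e_{s1} \<and> ... \<and> e_{sk}, where s1 < ... < sk
  lists S in increasing order.\<close>

definition sgn :: "ix set \<Rightarrow> ix set \<Rightarrow> real" where
  "sgn S T = (-1) ^ card {(s, t). s \<in> S \<and> t \<in> T \<and> rank t < rank s}"

text \<open>For disjoint S, T: e_S \<and> e_T = sgn S T e_{S \<union> T}. The wedge product is taken
  with respect to a bilinear pairing m of the coefficients.\<close>

definition wedge_with ::
  "('a \<Rightarrow> 'b \<Rightarrow> 'c::real_vector) \<Rightarrow> (ix set \<Rightarrow> 'a) \<Rightarrow> (ix set \<Rightarrow> 'b) \<Rightarrow> ix set \<Rightarrow> 'c" where
  "wedge_with m \<alpha> \<beta> U = (\<Sum>S\<in>Pow U. sgn S (U - S) *\<^sub>R m (\<alpha> S) (\<beta> (U - S)))"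

definition swedge :: "(ix set \<Rightarrow> real) \<Rightarrow> (ix set \<Rightarrow> 'v::real_vector) \<Rightarrow> ix set \<Rightarrow> 'v" where
  "swedge \<alpha> \<beta> = wedge_with (\<lambda>r v. r *\<^sub>R v) \<alpha> \<beta>"

text \<open>The basis covector e_a (identified with the vector e_a).\<close>
definition ev :: "ix \<Rightarrow> ix set \<Rightarrow> real" where
  "ev a S = (if S = {a} then 1 else 0)"

definition mono :: "ix list \<Rightarrow> ix set \<Rightarrow> real" where
  "mono as = foldr (\<lambda>a w. swedge (ev a) w) as (\<lambda>S. if S = {} then 1 else 0)"

text \<open>Euclidean Hodge star for orientation e_1 \<and> ... \<and> e_4 \<and> e_1-perp \<and> ... \<and> e_4-perp:
  * e_S = sgn S S^c e_{S^c}.\<close>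
definition star :: "(ix set \<Rightarrow> 'v::real_vector) \<Rightarrow> ix set \<Rightarrow> 'v" where
  "star \<alpha> U = sgn (UNIV - U) U *\<^sub>R \<alpha> (UNIV - U)"

definition intprod :: "ix \<Rightarrow> (ix set \<Rightarrow> 'v::real_vector) \<Rightarrow> ix set \<Rightarrow> 'v" where
  "intprod a \<alpha> T = (if a \<in> T then 0 else sgn {a} T *\<^sub>R \<alpha> (insert a T))"

definition eval2 :: "(ix set \<Rightarrow> 'v::real_vector) \<Rightarrow> ix \<Rightarrow> ix \<Rightarrow> 'v" where
  "eval2 F a b = (if a = b then 0 else sgn {a} {b} *\<^sub>R F {a, b})"

definition Omega :: "ix set \<Rightarrow> real" where
  "Omega S =
     - mono [E1,E2,P1,P2] S - mono [E1,E2,P3,P4] S - mono [E3,E4,P1,P2] S - mono [E3,E4,P3,P4] S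
     + mono [E1,E3,P2,P4] S - mono [E1,E3,P1,P3] S - mono [E2,E4,P2,P4] S + mono [E2,E4,P1,P3] S
     - mono [E1,E4,P2,P3] S - mono [E1,E4,P1,P4] S - mono [E2,E3,P2,P3] S - mono [E2,E3,P1,P4] S
     + mono [E1,E2,E3,E4] S + mono [P1,P2,P3,P4] S"

type_synonym gmat = "real^iq^iq"

definition basis_q :: "iq \<Rightarrow> real^iq" where
  "basis_q k = axis k 1"

text \<open>The matrix of the linear map sending e_c-perp to f c.\<close>
definition op_mat :: "(iq \<Rightarrow> real^iq) \<Rightarrow> gmat" where
  "op_mat f = (\<chi> r c. f c $ r)"

definition gi :: gmat where
  "gi = op_mat (\<lambda>c. case c of Q1 \<Rightarrow> - basis_q Q2 | Q2 \<Rightarrow> basis_q Q1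
                              | Q3 \<Rightarrow> basis_q Q4 | Q4 \<Rightarrow> - basis_q Q3)"

definition gj :: gmat where
  "gj = op_mat (\<lambda>c. case c of Q1 \<Rightarrow> - basis_q Q3 | Q2 \<Rightarrow> - basis_q Q4
                              | Q3 \<Rightarrow> basis_q Q1 | Q4 \<Rightarrow> basis_q Q2)"

definition gk :: gmat where
  "gk = op_mat (\<lambda>c. case c of Q1 \<Rightarrow> - basis_q Q4 | Q2 \<Rightarrow> basis_q Q3
                              | Q3 \<Rightarrow> - basis_q Q2 | Q4 \<Rightarrow> basis_q Q1)"

definition g_alg :: "gmat set" where
  "g_alg = span {gi, gj, gk}"

definition gbr :: "gmat \<Rightarrow> gmat \<Rightarrow> gmat" where
  "gbr X Y = X ** Y - Y ** X"

type_synonym pt = "real^ix"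
type_synonym gform = "pt \<Rightarrow> ix set \<Rightarrow> gmat"

primrec Ck :: "nat \<Rightarrow> ('a::real_normed_vector \<Rightarrow> 'b::real_normed_vector) \<Rightarrow> bool" where
  "Ck 0 f = continuous_on UNIV f"
| "Ck (Suc n) f = (f differentiable_on UNIV \<and>
                   (\<forall>v. Ck n (\<lambda>p. frechet_derivative f (at p) v)))"

definition smooth :: "('a::real_normed_vector \<Rightarrow> 'b::real_normed_vector) \<Rightarrow> bool" where
  "smooth f = (\<forall>n. Ck n f)"

definition smooth_form :: "gform \<Rightarrow> bool" where
  "smooth_form \<omega> = (\<forall>S. smooth (\<lambda>p. \<omega> p S))"

definition pd :: "ix \<Rightarrow> gform \<Rightarrow> gform" where
  "pd a \<omega> p S = frechet_derivative (\<lambda>q. \<omega> q S) (at p) (axis a 1)"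

definition dform :: "gform \<Rightarrow> gform" where
  "dform \<omega> p U = (\<Sum>a\<in>U. sgn {a} (U - {a}) *\<^sub>R pd a \<omega> p (U - {a}))"

definition ysq :: "pt \<Rightarrow> real" where
  "ysq p = (p $ P1)^2 + (p $ P2)^2 + (p $ P3)^2 + (p $ P4)^2"

definition Bc :: "real \<Rightarrow> pt \<Rightarrow> ix \<Rightarrow> gmat" where
  "Bc \<epsilon> p a = (1 / (\<epsilon>^2 + ysq p)) *\<^sub>R
     (case a of
        P1 \<Rightarrow> (- p$P2) *\<^sub>R gi + (- p$P3) *\<^sub>R gj + (- p$P4) *\<^sub>R gk
      | P2 \<Rightarrow> (p$P1) *\<^sub>R gi + (- p$P4) *\<^sub>R gj + (p$P3) *\<^sub>R gk
      | P3 \<Rightarrow> (p$P4) *\<^sub>R gi + (p$P1) *\<^sub>R gj + (- p$P2) *\<^sub>R gk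
      | P4 \<Rightarrow> (- p$P3) *\<^sub>R gi + (p$P2) *\<^sub>R gj + (p$P1) *\<^sub>R gk
      | _ \<Rightarrow> 0)"

text \<open>B as a g-valued 1-form: B = sum_a B(e_a) e^a.\<close>
definition Bform :: "real \<Rightarrow> gform" where
  "Bform \<epsilon> p S = (if \<exists>a. S = {a} then Bc \<epsilon> p (the_elem S) else 0)"

definition DB :: "real \<Rightarrow> gform \<Rightarrow> gform" where
  "DB \<epsilon> \<omega> p U = dform \<omega> p U + wedge_with gbr (Bform \<epsilon> p) (\<omega> p) U"

definition FB :: "real \<Rightarrow> gform" where
  "FB \<epsilon> p U = dform (Bform \<epsilon>) p U + (1/2) *\<^sub>R wedge_with gbr (Bform \<epsilon> p) (Bform \<epsilon> p) U"

definition cov :: "ix \<Rightarrow> real \<Rightarrow> gform \<Rightarrow> gform" where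
  "cov a \<epsilon> \<omega> p S = pd a \<omega> p S + gbr (Bc \<epsilon> p a) (\<omega> p S)"

definition rough_lap :: "real \<Rightarrow> gform \<Rightarrow> gform" where
  "rough_lap \<epsilon> \<omega> p S = - (\<Sum>a\<in>UNIV. cov a \<epsilon> (cov a \<epsilon> \<omega>) p S)"

text \<open>Formal L^2 adjoint of D_B (w.r.t. the Euclidean metric and an ad-invariant
  inner product on g): D_B^* w = - sum_a i_{e_a} nabla_{B,e_a} w.\<close>
definition DBstar :: "real \<Rightarrow> gform \<Rightarrow> gform" where
  "DBstar \<epsilon> \<omega> p T = - (\<Sum>a\<in>UNIV. intprod a (cov a \<epsilon> \<omega> p) T)"

definition Pplus :: "(ix set \<Rightarrow> gmat) \<Rightarrow> ix set \<Rightarrow> gmat" where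
  "Pplus \<phi> U = (1/4) *\<^sub>R (\<phi> U + star (swedge Omega \<phi>) U)"

definition is_two_form :: "(ix set \<Rightarrow> 'v::real_vector) \<Rightarrow> bool" where
  "is_two_form \<phi> = (\<forall>U. card U \<noteq> 2 \<longrightarrow> \<phi> U = 0)"

definition in_Lambda2plus :: "(ix set \<Rightarrow> gmat) \<Rightarrow> bool" where
  "in_Lambda2plus \<phi> = (is_two_form \<phi> \<and> (\<forall>U. 3 *\<^sub>R \<phi> U - star (swedge Omega \<phi>) U = 0))"

definition g_valued :: "gform \<Rightarrow> bool" where
  "g_valued \<omega> = (\<forall>p S. \<omega> p S \<in> g_alg)"

definition LB :: "real \<Rightarrow> gform \<Rightarrow> gform" where
  "LB \<epsilon> a p U = 2 *\<^sub>R Pplus (DB \<epsilon> a p) U"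

definition LBstar :: "real \<Rightarrow> gform \<Rightarrow> gform" where
  "LBstar \<epsilon> \<phi> p T = 2 *\<^sub>R DBstar \<epsilon> \<phi> p T"

definition Pperp :: "ix set" where
  "Pperp = {P1, P2, P3, P4}"

end

theory Submission
  imports Defs
begin

(* Since L_B^* \<phi> = -2 \<Sum>_a i_{e_a} \<nabla>_a \<phi> and D_B = \<Sum>_b e_b \<and> \<nabla>_b, we have
   L_B L_B^* \<phi> = -4 \<Sum>_{a,b} P_+ (e_b \<and> i_{e_a} \<nabla>_b \<nabla>_a \<phi>).  Split \<nabla>_b \<nabla>_a \<phi> into its part
   symmetric in (a, b) and half the commutator, which by the Ricci identity is [F_B(e_b, e_a), \<phi>].
   For \<psi> in \<Lambda>^2_+ one has P_+ (e_b \<and> i_{e_a} \<psi> + e_a \<and> i_{e_b} \<psi>) = \<delta>_ab \<psi> / 2, so the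
   symmetric part contributes - \<Sum>_a \<nabla>_a \<nabla>_a \<phi> = \<nabla>_B^* \<nabla>_B \<phi>.  The curvature F_B is
   \<epsilon>^2 / (\<epsilon>^2 + |y|^2)^2 times a constant g-valued anti-self-dual 2-form on E-perp, and the
   infinitesimal rotations of E-perp occurring in it preserve \<Lambda>^2_+, so P_+ fixes the curvature
   term. *)

section \<open>Exterior algebra in the standard basis\<close>

lemma sgn_eq_prod: "sgn S T = (\<Prod>s\<in>S. \<Prod>t\<in>T. if rank t < rank s then -1 else 1)"
proof -
  have "(\<Prod>s\<in>S. \<Prod>t\<in>T. if rank t < rank s then -1 else (1::real))
      = (\<Prod>x\<in>S\<times>T. if rank (snd x) < rank (fst x) then -1 else 1)"
    by (simp add: prod.cartesian_product case_prod_beta)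
  also have "\<dots> = (-1) ^ card ((S\<times>T) \<inter> {x. rank (snd x) < rank (fst x)})"
    by (simp add: prod.If_cases)
  also have "(S\<times>T) \<inter> {x. rank (snd x) < rank (fst x)} = {(s, t). s \<in> S \<and> t \<in> T \<and> rank t < rank s}"
    by auto
  finally show ?thesis unfolding sgn_def by simp
qed

lemma sgn_singletons: "sgn {x} {y} = (if rank y < rank x then -1 else 1)"
  by (simp add: sgn_eq_prod)

lemma sgn_singletons_swap: "a \<noteq> b \<Longrightarrow> sgn {a} {b} = - sgn {b} {a}"
  by (cases a; cases b) (simp_all add: sgn_singletons)

text \<open>Oriented instance of insert_commute: lets simp sort finite sets of indices by rank.\<close>

lemma insert_sort: "rank b < rank a \<Longrightarrow> insert a (insert b A) = insert b (insert a A)"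
  by (rule insert_commute)

lemma swedge_indicator:
  "swedge (\<lambda>S. if S = K then 1 else 0) g U = (if K \<subseteq> U then sgn K (U - K) *\<^sub>R g (U - K) else 0)"
proof -
  have "swedge (\<lambda>S. if S = K then 1 else 0) g U
      = (\<Sum>S\<in>Pow U. if S = K then sgn S (U - S) *\<^sub>R g (U - S) else 0)"
    unfolding swedge_def wedge_with_def by (intro sum.cong) auto
  then show ?thesis by (simp add: sum.delta')
qed

lemma swedge_ev: "swedge (ev b) g U = (if b \<in> U then sgn {b} (U - {b}) *\<^sub>R g (U - {b}) else 0)"
  unfolding ev_def[abs_def] by (simp add: swedge_indicator)

lemma mono_sorted:
  "sorted_wrt (\<lambda>x y. rank x < rank y) as \<Longrightarrow> mono as = (\<lambda>S. if S = set as then 1 else 0)"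
proof (induction as)
  case Nil
  then show ?case by (simp add: mono_def)
next
  case (Cons a as)
  have "sgn {a} (set as) = 1"
    using Cons.prems unfolding sgn_eq_prod by (auto intro!: prod.neutral simp: less_imp_not_less)
  moreover have "a \<notin> set as" using Cons.prems by auto
  ultimately show ?case
    using Cons by (auto simp: mono_def swedge_ev fun_eq_iff insert_Diff_if)
qed

lemma swedge_add_left: "swedge (\<lambda>S. f S + g S) h U = swedge f h U + swedge g h U"
  unfolding swedge_def wedge_with_def by (simp add: sum.distrib algebra_simps)

lemma swedge_diff_left: "swedge (\<lambda>S. f S - g S) h U = swedge f h U - swedge g h U"
  unfolding swedge_def wedge_with_def by (simp add: sum_subtractf algebra_simps)

lemma swedge_minus_left: "swedge (\<lambda>S. - f S) h U = - swedge f h U"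
  unfolding swedge_def wedge_with_def by (simp add: sum_negf)

lemma star_swedge_Omega:
  "star (swedge Omega g) {E1,E2} = g {E3,E4} - g {P1,P2} - g {P3,P4}"
  "star (swedge Omega g) {E1,E3} = - g {E2,E4} - g {P1,P3} + g {P2,P4}"
  "star (swedge Omega g) {E1,E4} = g {E2,E3} - g {P1,P4} - g {P2,P3}"
  "star (swedge Omega g) {E1,P1} = g {E2,P2} + g {E3,P3} + g {E4,P4}"
  "star (swedge Omega g) {E1,P2} = - g {E2,P1} - g {E3,P4} + g {E4,P3}"
  "star (swedge Omega g) {E1,P3} = g {E2,P4} - g {E3,P1} - g {E4,P2}"
  "star (swedge Omega g) {E1,P4} = - g {E2,P3} + g {E3,P2} - g {E4,P1}"
  "star (swedge Omega g) {E2,E3} = g {E1,E4} - g {P1,P4} - g {P2,P3}"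
  "star (swedge Omega g) {E2,E4} = - g {E1,E3} + g {P1,P3} - g {P2,P4}"
  "star (swedge Omega g) {E2,P1} = - g {E1,P2} + g {E3,P4} - g {E4,P3}"
  "star (swedge Omega g) {E2,P2} = g {E1,P1} + g {E3,P3} + g {E4,P4}"
  "star (swedge Omega g) {E2,P3} = - g {E1,P4} - g {E3,P2} + g {E4,P1}"
  "star (swedge Omega g) {E2,P4} = g {E1,P3} - g {E3,P1} - g {E4,P2}"
  "star (swedge Omega g) {E3,E4} = g {E1,E2} - g {P1,P2} - g {P3,P4}"
  "star (swedge Omega g) {E3,P1} = - g {E1,P3} - g {E2,P4} + g {E4,P2}"
  "star (swedge Omega g) {E3,P2} = g {E1,P4} - g {E2,P3} - g {E4,P1}"
  "star (swedge Omega g) {E3,P3} = g {E1,P1} + g {E2,P2} + g {E4,P4}"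
  "star (swedge Omega g) {E3,P4} = - g {E1,P2} + g {E2,P1} - g {E4,P3}"
  "star (swedge Omega g) {E4,P1} = - g {E1,P4} + g {E2,P3} - g {E3,P2}"
  "star (swedge Omega g) {E4,P2} = - g {E1,P3} - g {E2,P4} + g {E3,P1}"
  "star (swedge Omega g) {E4,P3} = g {E1,P2} - g {E2,P1} - g {E3,P4}"
  "star (swedge Omega g) {E4,P4} = g {E1,P1} + g {E2,P2} + g {E3,P3}"
  "star (swedge Omega g) {P1,P2} = - g {E1,E2} - g {E3,E4} + g {P3,P4}"
  "star (swedge Omega g) {P1,P3} = - g {E1,E3} + g {E2,E4} - g {P2,P4}"
  "star (swedge Omega g) {P1,P4} = - g {E1,E4} - g {E2,E3} + g {P2,P3}"
  "star (swedge Omega g) {P2,P3} = - g {E1,E4} - g {E2,E3} + g {P1,P4}"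
  "star (swedge Omega g) {P2,P4} = g {E1,E3} - g {E2,E4} - g {P1,P3}"
  "star (swedge Omega g) {P3,P4} = - g {E1,E2} - g {E3,E4} + g {P1,P2}"
  unfolding star_def Omega_def
  by (simp_all add: mono_sorted swedge_add_left swedge_diff_left swedge_minus_left swedge_indicator
      UNIV_ix sgn_eq_prod insert_commute insert_Diff_if)

lemma Omega_eq_0:
  assumes "card S \<noteq> 4"
  shows "Omega S = 0"
proof -
  have "(S = K) = False" if "card K = 4" for K
    using that assms by auto
  then show ?thesis
    by (simp add: Omega_def mono_sorted)
qed

lemma card_2_ix_induct [consumes 1]:
  assumes "card U = 2"
    and "P {E1,E2}" "P {E1,E3}" "P {E1,E4}" "P {E1,P1}" "P {E1,P2}" "P {E1,P3}" "P {E1,P4}"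
    "P {E2,E3}" "P {E2,E4}" "P {E2,P1}" "P {E2,P2}" "P {E2,P3}" "P {E2,P4}"
    "P {E3,E4}" "P {E3,P1}" "P {E3,P2}" "P {E3,P3}" "P {E3,P4}"
    "P {E4,P1}" "P {E4,P2}" "P {E4,P3}" "P {E4,P4}"
    "P {P1,P2}" "P {P1,P3}" "P {P1,P4}" "P {P2,P3}" "P {P2,P4}" "P {P3,P4}"
  shows "P U"
proof -
  obtain x y where "U = {x, y}" "x \<noteq> y" using assms(1) by (auto simp: card_2_iff)
  then show ?thesis using assms(2-) by (cases x; cases y; simp add: insert_commute)
qed

lemma swedge_add_right: "swedge \<alpha> (\<lambda>V. f V + g V) = (\<lambda>U. swedge \<alpha> f U + swedge \<alpha> g U)"
  unfolding swedge_def wedge_with_def by (simp add: scaleR_add_right sum.distrib)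

lemma swedge_scaleR_right: "swedge \<alpha> (\<lambda>V. c *\<^sub>R f V) = (\<lambda>U. c *\<^sub>R swedge \<alpha> f U)"
  unfolding swedge_def wedge_with_def by (simp add: scaleR_sum_right mult_ac)

lemma swedge_sum_right: "swedge \<alpha> (\<lambda>V. \<Sum>i\<in>I. f i V) = (\<lambda>U. \<Sum>i\<in>I. swedge \<alpha> (f i) U)"
  unfolding swedge_def wedge_with_def by (simp add: scaleR_sum_right sum.swap[of _ I])

lemma swedge_linear_image: "linear h \<Longrightarrow> h (swedge \<alpha> f U) = swedge \<alpha> (\<lambda>V. h (f V)) U"
  unfolding swedge_def wedge_with_def by (simp add: linear_sum linear_cmul)

lemma star_add: "star (\<lambda>V. f V + g V) = (\<lambda>U. star f U + star g U)"
  unfolding star_def by (simp add: scaleR_add_right)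

lemma star_scaleR: "star (\<lambda>V. c *\<^sub>R f V) = (\<lambda>U. c *\<^sub>R star f U)"
  unfolding star_def by (simp add: mult.commute)

lemma star_sum: "star (\<lambda>V. \<Sum>i\<in>I. f i V) = (\<lambda>U. \<Sum>i\<in>I. star (f i) U)"
  unfolding star_def by (simp add: scaleR_sum_right)

lemma star_linear_image: "linear h \<Longrightarrow> h (star f U) = star (\<lambda>V. h (f V)) U"
  unfolding star_def by (simp add: linear_cmul)

lemma intprod_add: "intprod a (\<lambda>V. f V + g V) = (\<lambda>U. intprod a f U + intprod a g U)"
  unfolding intprod_def by (simp add: scaleR_add_right fun_eq_iff)

lemma intprod_scaleR: "intprod a (\<lambda>V. c *\<^sub>R f V) = (\<lambda>U. c *\<^sub>R intprod a f U)"
  unfolding intprod_def by (simp add: fun_eq_iff)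

lemma intprod_sum: "intprod a (\<lambda>V. \<Sum>i\<in>I. f i V) = (\<lambda>U. \<Sum>i\<in>I. intprod a (f i) U)"
  unfolding intprod_def by (simp add: scaleR_sum_right fun_eq_iff)

lemma intprod_linear_image: "linear h \<Longrightarrow> h (intprod a f U) = intprod a (\<lambda>V. h (f V)) U"
  unfolding intprod_def by (simp add: linear_cmul linear_0)

section \<open>The projection onto \<Lambda>^2_+\<close>

text \<open>Pplus and in_Lambda2plus for forms with values in an arbitrary real vector space, so that
  identities can be checked on real coefficients.\<close>

definition proj_plus :: "(ix set \<Rightarrow> 'v::real_vector) \<Rightarrow> ix set \<Rightarrow> 'v" where
  "proj_plus \<phi> U = (1/4) *\<^sub>R (\<phi> U + star (swedge Omega \<phi>) U)"

definition lambda2_plus :: "(ix set \<Rightarrow> 'v::real_vector) \<Rightarrow> bool" where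
  "lambda2_plus \<phi> \<longleftrightarrow> is_two_form \<phi> \<and> (\<forall>U. 3 *\<^sub>R \<phi> U - star (swedge Omega \<phi>) U = 0)"

lemma Pplus_eq_proj_plus: "Pplus = proj_plus"
  by (simp add: fun_eq_iff Pplus_def proj_plus_def)

lemma in_Lambda2plus_iff: "in_Lambda2plus = lambda2_plus"
  by (simp add: fun_eq_iff in_Lambda2plus_def lambda2_plus_def)

definition wedge_int :: "ix \<Rightarrow> ix \<Rightarrow> (ix set \<Rightarrow> 'v::real_vector) \<Rightarrow> ix set \<Rightarrow> 'v" where
  "wedge_int k l \<phi> = swedge (ev k) (intprod l \<phi>)"

lemma wedge_int_add: "wedge_int k l (\<lambda>V. f V + g V) = (\<lambda>U. wedge_int k l f U + wedge_int k l g U)"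
  by (simp add: wedge_int_def intprod_add swedge_add_right)

lemma wedge_int_scaleR: "wedge_int k l (\<lambda>V. c *\<^sub>R f V) = (\<lambda>U. c *\<^sub>R wedge_int k l f U)"
  by (simp add: wedge_int_def intprod_scaleR swedge_scaleR_right)

lemma wedge_int_sum: "wedge_int k l (\<lambda>V. \<Sum>i\<in>I. f i V) = (\<lambda>U. \<Sum>i\<in>I. wedge_int k l (f i) U)"
  by (simp add: wedge_int_def intprod_sum swedge_sum_right)

lemma wedge_int_linear_image: "linear h \<Longrightarrow> h (wedge_int k l f U) = wedge_int k l (\<lambda>V. h (f V)) U"
  by (simp add: wedge_int_def swedge_linear_image intprod_linear_image)

lemma proj_plus_add: "proj_plus (\<lambda>V. f V + g V) = (\<lambda>U. proj_plus f U + proj_plus g U)"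
  unfolding proj_plus_def by (simp add: swedge_add_right star_add algebra_simps)

lemma proj_plus_scaleR: "proj_plus (\<lambda>V. c *\<^sub>R f V) = (\<lambda>U. c *\<^sub>R proj_plus f U)"
  unfolding proj_plus_def by (simp add: swedge_scaleR_right star_scaleR scaleR_add_right)

lemma proj_plus_sum: "proj_plus (\<lambda>V. \<Sum>i\<in>I. f i V) = (\<lambda>U. \<Sum>i\<in>I. proj_plus (f i) U)"
  unfolding proj_plus_def
  by (simp add: swedge_sum_right star_sum scaleR_sum_right sum.distrib scaleR_add_right)

lemma proj_plus_linear_image: "linear h \<Longrightarrow> h (proj_plus f U) = proj_plus (\<lambda>V. h (f V)) U"
  unfolding proj_plus_def by (simp add: linear_cmul linear_add swedge_linear_image star_linear_image)

lemma lambda2_plus_add: "lambda2_plus f \<Longrightarrow> lambda2_plus g \<Longrightarrow> lambda2_plus (\<lambda>S. f S + g S)"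
  unfolding lambda2_plus_def is_two_form_def
  by (simp add: swedge_add_right star_add scaleR_add_right algebra_simps)

lemma lambda2_plus_linear_image:
  assumes h: "linear h" and "lambda2_plus \<psi>"
  shows "lambda2_plus (\<lambda>S. h (\<psi> S))"
proof -
  have "h (3 *\<^sub>R \<psi> U - star (swedge Omega \<psi>) U) = 3 *\<^sub>R h (\<psi> U) - star (swedge Omega (\<lambda>S. h (\<psi> S))) U" for U
    using h by (simp add: linear_diff linear_cmul star_linear_image swedge_linear_image)
  then show ?thesis
    using assms unfolding lambda2_plus_def is_two_form_def by (simp add: linear_0)
qed

text \<open>\<Lambda>^2_+ is 7-dimensional: a form in it is determined by its coefficients on
  e_1 \<and> e_2, e_1 \<and> e_3, e_1 \<and> e_4 and e_1 \<and> e_k-perp.\<close>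

lemma lambda2_plus_coordinates:
  fixes \<psi> :: "ix set \<Rightarrow> real"
  assumes "lambda2_plus \<psi>"
  shows "\<psi> {E2,P3} = -\<psi> {E1,P4}" "\<psi> {E3,P2} = \<psi> {E1,P4}" "\<psi> {E4,P1} = -\<psi> {E1,P4}"
    "\<psi> {E2,P4} = \<psi> {E1,P3}" "\<psi> {E3,P1} = -\<psi> {E1,P3}" "\<psi> {E4,P2} = -\<psi> {E1,P3}"
    "\<psi> {E2,P1} = -\<psi> {E1,P2}" "\<psi> {E3,P4} = -\<psi> {E1,P2}" "\<psi> {E4,P3} = \<psi> {E1,P2}"
    "\<psi> {E2,P2} = \<psi> {E1,P1}" "\<psi> {E3,P3} = \<psi> {E1,P1}" "\<psi> {E4,P4} = \<psi> {E1,P1}"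
    "\<psi> {E2,E3} = \<psi> {E1,E4}" "\<psi> {P1,P4} = -\<psi> {E1,E4}" "\<psi> {P2,P3} = -\<psi> {E1,E4}"
    "\<psi> {E2,E4} = -\<psi> {E1,E3}" "\<psi> {P1,P3} = -\<psi> {E1,E3}" "\<psi> {P2,P4} = \<psi> {E1,E3}"
    "\<psi> {E3,E4} = \<psi> {E1,E2}" "\<psi> {P1,P2} = -\<psi> {E1,E2}" "\<psi> {P3,P4} = -\<psi> {E1,E2}"
proof -
  have eq: "3 * \<psi> U = star (swedge Omega \<psi>) U" for U
    using assms by (simp add: lambda2_plus_def)
  note eqs = eq[of "{E1,E2}"] eq[of "{E1,E3}"] eq[of "{E1,E4}"] eq[of "{E1,P1}"] eq[of "{E1,P2}"]
    eq[of "{E1,P3}"] eq[of "{E1,P4}"] eq[of "{E2,E3}"] eq[of "{E2,E4}"] eq[of "{E2,P1}"]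
    eq[of "{E2,P2}"] eq[of "{E2,P3}"] eq[of "{E2,P4}"] eq[of "{E3,E4}"] eq[of "{E3,P1}"]
    eq[of "{E3,P2}"] eq[of "{E3,P3}"] eq[of "{E3,P4}"] eq[of "{E4,P1}"] eq[of "{E4,P2}"]
    eq[of "{E4,P3}"] eq[of "{E4,P4}"] eq[of "{P1,P2}"] eq[of "{P1,P3}"] eq[of "{P1,P4}"]
    eq[of "{P2,P3}"] eq[of "{P2,P4}"] eq[of "{P3,P4}"]
  show "\<psi> {E2,P3} = -\<psi> {E1,P4}" "\<psi> {E3,P2} = \<psi> {E1,P4}" "\<psi> {E4,P1} = -\<psi> {E1,P4}"
    "\<psi> {E2,P4} = \<psi> {E1,P3}" "\<psi> {E3,P1} = -\<psi> {E1,P3}" "\<psi> {E4,P2} = -\<psi> {E1,P3}"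
    "\<psi> {E2,P1} = -\<psi> {E1,P2}" "\<psi> {E3,P4} = -\<psi> {E1,P2}" "\<psi> {E4,P3} = \<psi> {E1,P2}"
    "\<psi> {E2,P2} = \<psi> {E1,P1}" "\<psi> {E3,P3} = \<psi> {E1,P1}" "\<psi> {E4,P4} = \<psi> {E1,P1}"
    "\<psi> {E2,E3} = \<psi> {E1,E4}" "\<psi> {P1,P4} = -\<psi> {E1,E4}" "\<psi> {P2,P3} = -\<psi> {E1,E4}"
    "\<psi> {E2,E4} = -\<psi> {E1,E3}" "\<psi> {P1,P3} = -\<psi> {E1,E3}" "\<psi> {P2,P4} = \<psi> {E1,E3}"
    "\<psi> {E3,E4} = \<psi> {E1,E2}" "\<psi> {P1,P2} = -\<psi> {E1,E2}" "\<psi> {P3,P4} = -\<psi> {E1,E2}"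
    using eqs unfolding star_swedge_Omega by linarith+
qed

lemma wedge_int_pair:
  "c \<noteq> d \<Longrightarrow> wedge_int b a \<psi> {c, d} =
     (if b = c then (if a = d then 0 else sgn {c} {d} * sgn {a} {d}) *\<^sub>R \<psi> {a, d}
      else if b = d then (if a = c then 0 else sgn {d} {c} * sgn {a} {c}) *\<^sub>R \<psi> {a, c} else 0)"
  by (auto simp: wedge_int_def swedge_ev intprod_def insert_Diff_if)

lemma is_two_form_wedge_int: "is_two_form f \<Longrightarrow> is_two_form (wedge_int k l f)"
  unfolding is_two_form_def wedge_int_def
proof (intro allI impI)
  fix V :: "ix set"
  assume f: "\<forall>U. card U \<noteq> 2 \<longrightarrow> f U = 0" and V: "card V \<noteq> 2"
  show "swedge (ev k) (intprod l f) V = 0"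
  proof (cases "k \<in> V \<and> l \<notin> V - {k}")
    case True
    then have "card V > 0"
      by (auto simp: card_gt_0_iff)
    with True have "card (insert l (V - {k})) = card V"
      by simp
    then show ?thesis using True f V by (simp add: swedge_ev intprod_def)
  qed (auto simp: swedge_ev intprod_def)
qed

lemma star_swedge_Omega_eq_0:
  assumes f: "is_two_form f" and U: "card U \<noteq> 2"
  shows "star (swedge Omega f) U = 0"
proof -
  have "Omega S *\<^sub>R f (UNIV - U - S) = 0" if S: "S \<subseteq> UNIV - U" for S
  proof (cases "card S = 4 \<and> card (UNIV - U - S) = 2")
    case True
    have "card (UNIV - U - S) = card (UNIV - U) - card S"
      using S by (simp add: card_Diff_subset)
    moreover have "card S \<le> card (UNIV - U)"
      using S by (simp add: card_mono)
    moreover have "card (UNIV - U) = CARD(ix) - card U"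
      using card_Diff_subset[of U UNIV] by simp
    moreover have "card U \<le> CARD(ix)"
      using card_mono[of UNIV U] by simp
    moreover have "CARD(ix) = 8"
      by (simp add: UNIV_ix)
    ultimately show ?thesis using True U by linarith
  qed (use f Omega_eq_0 in \<open>auto simp: is_two_form_def\<close>)
  then show ?thesis
    by (simp add: star_def swedge_def wedge_with_def sum.neutral)
qed

lemma proj_plus_eq_0: "is_two_form f \<Longrightarrow> card U \<noteq> 2 \<Longrightarrow> proj_plus f U = 0"
  by (simp add: proj_plus_def star_swedge_Omega_eq_0 is_two_form_def)

lemma proj_plus_wedge_int_symmetric_real:
  fixes \<psi> :: "ix set \<Rightarrow> real"
  assumes "lambda2_plus \<psi>"
  shows "proj_plus (\<lambda>V. wedge_int b a \<psi> V + wedge_int a b \<psi> V) U = (if a = b then \<psi> U / 2 else 0)"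
proof (cases "card U = 2")
  case True
  have ordered: "proj_plus (\<lambda>V. wedge_int b a \<psi> V + wedge_int a b \<psi> V) U = (if a = b then \<psi> U / 2 else 0)"
    if "rank a \<le> rank b" for a b
    using True that
    by (induct U rule: card_2_ix_induct; cases a; cases b;
        simp add: proj_plus_def star_swedge_Omega wedge_int_pair sgn_singletons insert_sort
          lambda2_plus_coordinates[OF assms])
  show ?thesis
  proof (cases "rank a \<le> rank b")
    case False
    then show ?thesis
      using ordered[of b a] by (simp add: add.commute eq_commute)
  qed (rule ordered)
next
  case False
  have "is_two_form \<psi>" using assms by (simp add: lambda2_plus_def)
  then have "is_two_form (\<lambda>V. wedge_int b a \<psi> V + wedge_int a b \<psi> V)"
    using is_two_form_wedge_int[of \<psi>] by (simp add: is_two_form_def)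
  with False \<open>is_two_form \<psi>\<close> show ?thesis by (simp add: proj_plus_eq_0 is_two_form_def)
qed

lemma proj_plus_wedge_int_symmetric:
  fixes \<psi> :: "ix set \<Rightarrow> 'v::euclidean_space"
  assumes "lambda2_plus \<psi>"
  shows "proj_plus (\<lambda>V. wedge_int b a \<psi> V + wedge_int a b \<psi> V) U = (if a = b then (1/2) *\<^sub>R \<psi> U else 0)"
proof (rule euclidean_eqI)
  fix i :: 'v
  have lin: "linear (\<lambda>x::'v. x \<bullet> i)" by (simp add: bounded_linear.linear bounded_linear_inner_left)
  have "proj_plus (\<lambda>V. wedge_int b a \<psi> V + wedge_int a b \<psi> V) U \<bullet> i
      = proj_plus (\<lambda>V. wedge_int b a (\<lambda>S. \<psi> S \<bullet> i) V + wedge_int a b (\<lambda>S. \<psi> S \<bullet> i) V) U"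
    by (simp add: proj_plus_linear_image[OF lin] wedge_int_linear_image[OF lin] inner_add_left)
  also have "\<dots> = (if a = b then \<psi> U \<bullet> i / 2 else 0)"
    by (rule proj_plus_wedge_int_symmetric_real[OF lambda2_plus_linear_image[OF lin assms]])
  finally show "proj_plus (\<lambda>V. wedge_int b a \<psi> V + wedge_int a b \<psi> V) U \<bullet> i
      = (if a = b then (1/2) *\<^sub>R \<psi> U else 0) \<bullet> i"
    by simp
qed

lemma sum_proj_plus_wedge_int_symmetric:
  fixes S :: "ix \<Rightarrow> ix \<Rightarrow> ix set \<Rightarrow> 'v::euclidean_space"
  assumes "\<And>a b. lambda2_plus (S a b)" and "\<And>a b. S a b = S b a"
  shows "(\<Sum>b\<in>UNIV. \<Sum>a\<in>UNIV. proj_plus (wedge_int b a (S a b)) U) = (1/4) *\<^sub>R (\<Sum>b\<in>UNIV. S b b U)"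
proof -
  let ?X = "\<Sum>b\<in>UNIV. \<Sum>a\<in>UNIV. proj_plus (wedge_int b a (S a b)) U"
  have "?X = (\<Sum>b\<in>UNIV. \<Sum>a\<in>UNIV. proj_plus (wedge_int a b (S a b)) U)"
    by (subst sum.swap) (simp add: assms(2))
  then have "2 *\<^sub>R ?X = (\<Sum>b\<in>UNIV. \<Sum>a\<in>UNIV.
      proj_plus (\<lambda>V. wedge_int b a (S a b) V + wedge_int a b (S a b) V) U)"
    by (simp add: proj_plus_add wedge_int_add sum.distrib scaleR_2)
  also have "\<dots> = (\<Sum>b\<in>UNIV. \<Sum>a\<in>UNIV. if a = b then (1/2) *\<^sub>R S a b U else 0)"
    by (simp add: proj_plus_wedge_int_symmetric assms(1))
  also have "\<dots> = (1/2) *\<^sub>R (\<Sum>b\<in>UNIV. S b b U)"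
    by (simp add: scaleR_sum_right)
  finally have "(1/2) *\<^sub>R (2 *\<^sub>R ?X) = (1/2) *\<^sub>R ((1/2) *\<^sub>R (\<Sum>b\<in>UNIV. S b b U))"
    by simp
  then show ?thesis
    by simp
qed

lemma sum_proj_plus_wedge_int:
  fixes T :: "ix \<Rightarrow> ix \<Rightarrow> ix set \<Rightarrow> 'v::euclidean_space"
  assumes "\<And>a b. lambda2_plus (T a b)"
  shows "(\<Sum>b\<in>UNIV. \<Sum>a\<in>UNIV. proj_plus (wedge_int b a (T a b)) U)
       = (1/4) *\<^sub>R (\<Sum>b\<in>UNIV. T b b U)
         + (1/2) *\<^sub>R proj_plus (\<lambda>V. \<Sum>b\<in>UNIV. \<Sum>a\<in>UNIV. wedge_int b a (\<lambda>S. T a b S - T b a S) V) U"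
proof -
  define Sym where "Sym a b S = (1/2) *\<^sub>R (T a b S + T b a S)" for a b S
  define Alt where "Alt a b S = T a b S - T b a S" for a b S
  have T: "T a b = (\<lambda>S. Sym a b S + (1/2) *\<^sub>R Alt a b S)" for a b
    by (simp add: Sym_def Alt_def fun_eq_iff algebra_simps) (simp flip: scaleR_add_left)
  have "lambda2_plus (Sym a b)" for a b
    unfolding Sym_def
    by (intro lambda2_plus_linear_image[where h="scaleR (1/2)"] lambda2_plus_add assms)
      (rule bounded_linear.linear[OF bounded_linear_scaleR_right])
  moreover have "Sym a b = Sym b a" for a b
    by (simp add: Sym_def fun_eq_iff add.commute)
  ultimately have "(\<Sum>b\<in>UNIV. \<Sum>a\<in>UNIV. proj_plus (wedge_int b a (Sym a b)) U) = (1/4) *\<^sub>R (\<Sum>b\<in>UNIV. T b b U)"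
    by (simp add: sum_proj_plus_wedge_int_symmetric Sym_def)
  then show ?thesis
    by (subst T) (simp add: wedge_int_add wedge_int_scaleR proj_plus_add proj_plus_scaleR
        proj_plus_sum wedge_int_sum sum.distrib scaleR_sum_right Alt_def)
qed

text \<open>An infinitesimal rotation A of R^8 acts on forms as the derivation
  \<psi> \<mapsto> \<Sum>_{b,a} A b a e_b \<and> i_{e_a} \<psi>.\<close>

definition rot_action ::
    "(ix \<Rightarrow> ix \<Rightarrow> real) \<Rightarrow> (ix set \<Rightarrow> 'v::real_vector) \<Rightarrow> ix set \<Rightarrow> 'v" where
  "rot_action A \<psi> V = (\<Sum>b\<in>UNIV. \<Sum>a\<in>UNIV. A b a *\<^sub>R wedge_int b a \<psi> V)"

text \<open>The anti-self-dual forms 2 (e_1 \<and> e_2 - e_3 \<and> e_4), 2 (e_1 \<and> e_3 + e_2 \<and> e_4) and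
  2 (e_1 \<and> e_4 - e_2 \<and> e_3) on E-perp: F_B is a multiple of their combination with i, j, k.\<close>

definition instanton_i :: "ix \<Rightarrow> ix \<Rightarrow> real" where
  "instanton_i b a =
     (if (b, a) \<in> {(P1, P2), (P4, P3)} then 2 else if (b, a) \<in> {(P2, P1), (P3, P4)} then -2 else 0)"

definition instanton_j :: "ix \<Rightarrow> ix \<Rightarrow> real" where
  "instanton_j b a =
     (if (b, a) \<in> {(P1, P3), (P2, P4)} then 2 else if (b, a) \<in> {(P3, P1), (P4, P2)} then -2 else 0)"

definition instanton_k :: "ix \<Rightarrow> ix \<Rightarrow> real" where
  "instanton_k b a =
     (if (b, a) \<in> {(P1, P4), (P3, P2)} then 2 else if (b, a) \<in> {(P4, P1), (P2, P3)} then -2 else 0)"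

lemma rot_action_instanton:
  "rot_action instanton_i \<psi> V
     = 2 *\<^sub>R (wedge_int P1 P2 \<psi> V - wedge_int P2 P1 \<psi> V - wedge_int P3 P4 \<psi> V + wedge_int P4 P3 \<psi> V)"
  "rot_action instanton_j \<psi> V
     = 2 *\<^sub>R (wedge_int P1 P3 \<psi> V - wedge_int P3 P1 \<psi> V + wedge_int P2 P4 \<psi> V - wedge_int P4 P2 \<psi> V)"
  "rot_action instanton_k \<psi> V
     = 2 *\<^sub>R (wedge_int P1 P4 \<psi> V - wedge_int P4 P1 \<psi> V - wedge_int P2 P3 \<psi> V + wedge_int P3 P2 \<psi> V)"
  by (simp_all add: rot_action_def UNIV_ix instanton_i_def instanton_j_def instanton_k_def algebra_simps)

lemma rot_action_linear_image: "linear h \<Longrightarrow> h (rot_action A \<psi> V) = rot_action A (\<lambda>S. h (\<psi> S)) V"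
  by (simp add: rot_action_def linear_sum linear_cmul wedge_int_linear_image)

lemma is_two_form_rot_action: "is_two_form \<psi> \<Longrightarrow> is_two_form (rot_action A \<psi>)"
  using is_two_form_wedge_int[of \<psi>] by (simp add: is_two_form_def rot_action_def)

text \<open>These rotations of E-perp lie in the stabiliser of \<Omega>, hence commute with P_+.\<close>

lemma proj_plus_rot_action_instanton_real:
  fixes \<psi> :: "ix set \<Rightarrow> real"
  assumes "lambda2_plus \<psi>" and "A \<in> {instanton_i, instanton_j, instanton_k}"
  shows "proj_plus (rot_action A \<psi>) U = rot_action A \<psi> U"
proof (cases "card U = 2")
  case True
  then show ?thesis
    using assms(2)
    by (induct U rule: card_2_ix_induct; elim insertE emptyE;
        simp add: proj_plus_def star_swedge_Omega rot_action_instanton wedge_int_pair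
          sgn_singletons insert_sort lambda2_plus_coordinates[OF assms(1)])
next
  case False
  have "is_two_form \<psi>" using assms(1) by (simp add: lambda2_plus_def)
  with False show ?thesis
    using is_two_form_rot_action by (metis is_two_form_def proj_plus_eq_0)
qed

lemma proj_plus_rot_action_instanton:
  fixes \<psi> :: "ix set \<Rightarrow> 'v::euclidean_space"
  assumes "lambda2_plus \<psi>" and "A \<in> {instanton_i, instanton_j, instanton_k}"
  shows "proj_plus (rot_action A \<psi>) U = rot_action A \<psi> U"
proof (rule euclidean_eqI)
  fix i :: 'v
  have lin: "linear (\<lambda>x::'v. x \<bullet> i)" by (simp add: bounded_linear.linear bounded_linear_inner_left)
  show "proj_plus (rot_action A \<psi>) U \<bullet> i = rot_action A \<psi> U \<bullet> i"
    using proj_plus_rot_action_instanton_real[OF lambda2_plus_linear_image[OF lin assms(1)] assms(2)]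
    by (simp add: proj_plus_linear_image[OF lin] rot_action_linear_image[OF lin])
qed

section \<open>Symmetry of second derivatives\<close>

lemma has_real_derivative_along_line:
  fixes u :: "'a::real_normed_vector \<Rightarrow> real"
  assumes "\<And>q. (u has_derivative Du q) (at q)"
  shows "((\<lambda>s. u (w + s *\<^sub>R v)) has_real_derivative Du (w + s *\<^sub>R v) v) (at s)"
proof -
  have "((\<lambda>s. w + s *\<^sub>R v) has_derivative (\<lambda>h. h *\<^sub>R v)) (at s)"
    by (auto intro!: derivative_eq_intros)
  from diff_chain_at[OF this assms]
  have "((\<lambda>s. u (w + s *\<^sub>R v)) has_derivative (\<lambda>h. Du (w + s *\<^sub>R v) (h *\<^sub>R v))) (at s)"
    by (simp add: o_def)
  moreover have "linear (Du (w + s *\<^sub>R v))"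
    using assms has_derivative_linear by blast
  then have "(\<lambda>h. Du (w + s *\<^sub>R v) (h *\<^sub>R v)) = (*) (Du (w + s *\<^sub>R v) v)"
    by (simp add: linear_cmul fun_eq_iff)
  ultimately show ?thesis
    by (simp add: has_field_derivative_def)
qed

lemma second_difference_mean_value:
  fixes u :: "'a::real_normed_vector \<Rightarrow> real"
  assumes Du: "\<And>q. (u has_derivative Du q) (at q)"
    and Da: "\<And>q. ((\<lambda>q. Du q va) has_derivative Da q) (at q)"
    and "t > 0"
  obtains \<sigma> \<tau> where "0 < \<sigma>" "\<sigma> < t" "0 < \<tau>" "\<tau> < t"
    "u (p + t *\<^sub>R va + t *\<^sub>R vb) - u (p + t *\<^sub>R va) - u (p + t *\<^sub>R vb) + u p
       = t * t * Da (p + \<sigma> *\<^sub>R va + \<tau> *\<^sub>R vb) vb"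
proof -
  define g where "g s = u ((p + t *\<^sub>R vb) + s *\<^sub>R va) - u (p + s *\<^sub>R va)" for s
  have "(g has_real_derivative Du ((p + t *\<^sub>R vb) + s *\<^sub>R va) va - Du (p + s *\<^sub>R va) va) (at s)" for s
    unfolding g_def by (intro derivative_intros has_real_derivative_along_line[OF Du])
  then obtain \<sigma> where \<sigma>: "0 < \<sigma>" "\<sigma> < t"
    "g t - g 0 = t * (Du ((p + t *\<^sub>R vb) + \<sigma> *\<^sub>R va) va - Du (p + \<sigma> *\<^sub>R va) va)"
    using MVT2[OF \<open>t > 0\<close>, of g] by force
  define k where "k r = Du ((p + \<sigma> *\<^sub>R va) + r *\<^sub>R vb) va" for r
  have "(k has_real_derivative Da ((p + \<sigma> *\<^sub>R va) + r *\<^sub>R vb) vb) (at r)" for r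
    unfolding k_def by (rule has_real_derivative_along_line[where u="\<lambda>q. Du q va", OF Da])
  then obtain \<tau> where \<tau>: "0 < \<tau>" "\<tau> < t" "k t - k 0 = t * Da ((p + \<sigma> *\<^sub>R va) + \<tau> *\<^sub>R vb) vb"
    using MVT2[OF \<open>t > 0\<close>, of k] by force
  have "u (p + t *\<^sub>R va + t *\<^sub>R vb) - u (p + t *\<^sub>R va) - u (p + t *\<^sub>R vb) + u p = g t - g 0"
    by (simp add: g_def algebra_simps)
  also have "\<dots> = t * (k t - k 0)"
    unfolding \<sigma>(3) k_def by (simp add: algebra_simps)
  finally show ?thesis
    using that \<sigma>(1,2) \<tau> by simp
qed

lemma mixed_derivatives_meet:
  fixes u :: "'a::real_normed_vector \<Rightarrow> real"
  assumes Du: "\<And>q. (u has_derivative Du q) (at q)"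
    and Da: "\<And>q. ((\<lambda>q. Du q va) has_derivative Da q) (at q)"
    and Db: "\<And>q. ((\<lambda>q. Du q vb) has_derivative Db q) (at q)"
    and "t > 0"
  obtains q1 q2 where "dist q1 p < t * (norm va + norm vb + 1)" "dist q2 p < t * (norm va + norm vb + 1)"
    "Da q1 vb = Db q2 va"
proof -
  have near: "dist (p + s *\<^sub>R v + r *\<^sub>R w) p < t * (norm v + norm w + 1)"
    if "0 < s" "s < t" "0 < r" "r < t" for s r v w
  proof -
    have "dist (p + s *\<^sub>R v + r *\<^sub>R w) p \<le> s * norm v + r * norm w"
      using that norm_triangle_ineq[of "s *\<^sub>R v" "r *\<^sub>R w"] by (simp add: dist_norm)
    also have "\<dots> \<le> t * norm v + t * norm w"
      using that by (intro add_mono mult_right_mono) auto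
    also have "\<dots> < t * (norm v + norm w + 1)"
      using \<open>t > 0\<close> by (simp add: algebra_simps)
    finally show ?thesis .
  qed
  obtain s1 r1 where sr1: "0 < s1" "s1 < t" "0 < r1" "r1 < t"
    "u (p + t *\<^sub>R va + t *\<^sub>R vb) - u (p + t *\<^sub>R va) - u (p + t *\<^sub>R vb) + u p
       = t * t * Da (p + s1 *\<^sub>R va + r1 *\<^sub>R vb) vb"
    using second_difference_mean_value[OF Du Da \<open>t > 0\<close>] by blast
  obtain s2 r2 where sr2: "0 < s2" "s2 < t" "0 < r2" "r2 < t"
    "u (p + t *\<^sub>R vb + t *\<^sub>R va) - u (p + t *\<^sub>R vb) - u (p + t *\<^sub>R va) + u p
       = t * t * Db (p + s2 *\<^sub>R vb + r2 *\<^sub>R va) va"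
    using second_difference_mean_value[OF Du Db \<open>t > 0\<close>] by blast
  have swap: "p + t *\<^sub>R vb + t *\<^sub>R va = p + t *\<^sub>R va + t *\<^sub>R vb" by (simp add: algebra_simps)
  have "t * t * Da (p + s1 *\<^sub>R va + r1 *\<^sub>R vb) vb = t * t * Db (p + s2 *\<^sub>R vb + r2 *\<^sub>R va) va"
    using sr1(5) sr2(5)[unfolded swap] by linarith
  with \<open>t > 0\<close> have "Da (p + s1 *\<^sub>R va + r1 *\<^sub>R vb) vb = Db (p + s2 *\<^sub>R vb + r2 *\<^sub>R va) va"
    by simp
  moreover have "norm vb + norm va + 1 = norm va + norm vb + 1"
    by simp
  ultimately show ?thesis
    using that near[OF sr1(1-4), of va vb] near[OF sr2(1-4), of vb va] by metis
qed

text \<open>Both mixed derivatives are limits of the same second difference quotient.\<close>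

lemma second_derivative_symmetric:
  fixes u :: "'a::real_normed_vector \<Rightarrow> real"
  assumes Du: "\<And>q. (u has_derivative Du q) (at q)"
    and Da: "\<And>q. ((\<lambda>q. Du q va) has_derivative Da q) (at q)"
    and Db: "\<And>q. ((\<lambda>q. Du q vb) has_derivative Db q) (at q)"
    and cont_a: "continuous_on UNIV (\<lambda>q. Da q vb)"
    and cont_b: "continuous_on UNIV (\<lambda>q. Db q va)"
  shows "Da p vb = Db p va"
proof (rule ccontr)
  assume "Da p vb \<noteq> Db p va"
  define e where "e = \<bar>Da p vb - Db p va\<bar> / 2"
  have "e > 0" using \<open>Da p vb \<noteq> Db p va\<close> by (simp add: e_def)
  obtain da where da: "da > 0" "\<And>q. dist q p < da \<Longrightarrow> dist (Da q vb) (Da p vb) < e"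
    using cont_a \<open>e > 0\<close> unfolding continuous_on_iff by blast
  obtain db where db: "db > 0" "\<And>q. dist q p < db \<Longrightarrow> dist (Db q va) (Db p va) < e"
    using cont_b \<open>e > 0\<close> unfolding continuous_on_iff by blast
  define M where "M = norm va + norm vb + 1"
  have "M > 0" by (simp add: M_def add_nonneg_pos)
  then have "min da db / M > 0" and tM: "min da db / M * M = min da db"
    using da db by simp_all
  then obtain q1 q2 where q: "dist q1 p < min da db" "dist q2 p < min da db" "Da q1 vb = Db q2 va"
    using mixed_derivatives_meet[OF Du Da Db, of "min da db / M" p] unfolding M_def by metis
  have "dist (Da q1 vb) (Da p vb) < e" "dist (Db q2 va) (Db p va) < e"
    using q(1,2) da(2) db(2) by auto
  then have "\<bar>Da p vb - Db p va\<bar> < 2 * e"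
    using q(3) by (simp add: dist_real_def)
  then show False by (simp add: e_def)
qed

lemma smooth_has_derivative: "smooth f \<Longrightarrow> (f has_derivative frechet_derivative f (at p)) (at p)"
  using frechet_derivative_works
  by (metis Ck.simps(2) UNIV_I differentiable_on_def smooth_def)

lemma smooth_frechet_derivative: "smooth f \<Longrightarrow> smooth (\<lambda>p. frechet_derivative f (at p) v)"
  unfolding smooth_def by (metis Ck.simps(2))

lemma smooth_continuous_on: "smooth f \<Longrightarrow> continuous_on UNIV f"
  unfolding smooth_def by (metis Ck.simps(1))

lemma smooth_second_derivative_symmetric:
  fixes f :: "'a::real_normed_vector \<Rightarrow> 'b::euclidean_space"
  assumes f: "smooth f"
  shows "frechet_derivative (\<lambda>q. frechet_derivative f (at q) v) (at p) w
       = frechet_derivative (\<lambda>q. frechet_derivative f (at q) w) (at p) v"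
proof (rule euclidean_eqI)
  fix i :: 'b
  note inner = bounded_linear_inner_left[of i]
  have fv: "smooth (\<lambda>q. frechet_derivative f (at q) v)" and fw: "smooth (\<lambda>q. frechet_derivative f (at q) w)"
    using f by (simp_all add: smooth_frechet_derivative)
  show "frechet_derivative (\<lambda>q. frechet_derivative f (at q) v) (at p) w \<bullet> i
      = frechet_derivative (\<lambda>q. frechet_derivative f (at q) w) (at p) v \<bullet> i"
  proof (rule second_derivative_symmetric[where Du="\<lambda>q v. frechet_derivative f (at q) v \<bullet> i"])
    show "((\<lambda>q. f q \<bullet> i) has_derivative (\<lambda>v. frechet_derivative f (at q) v \<bullet> i)) (at q)" for q
      by (rule bounded_linear.has_derivative[OF inner smooth_has_derivative[OF f]])
    show "((\<lambda>q. frechet_derivative f (at q) v \<bullet> i) has_derivative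
        (\<lambda>w. frechet_derivative (\<lambda>q. frechet_derivative f (at q) v) (at q) w \<bullet> i)) (at q)" for q
      by (rule bounded_linear.has_derivative[OF inner smooth_has_derivative[OF fv]])
    show "((\<lambda>q. frechet_derivative f (at q) w \<bullet> i) has_derivative
        (\<lambda>v. frechet_derivative (\<lambda>q. frechet_derivative f (at q) w) (at q) v \<bullet> i)) (at q)" for q
      by (rule bounded_linear.has_derivative[OF inner smooth_has_derivative[OF fw]])
    show "continuous_on UNIV (\<lambda>q. frechet_derivative (\<lambda>q. frechet_derivative f (at q) v) (at q) w \<bullet> i)"
      using smooth_continuous_on[OF smooth_frechet_derivative[OF fv]]
      by (intro bounded_linear.continuous_on[OF inner])
    show "continuous_on UNIV (\<lambda>q. frechet_derivative (\<lambda>q. frechet_derivative f (at q) w) (at q) v \<bullet> i)"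
      using smooth_continuous_on[OF smooth_frechet_derivative[OF fw]]
      by (intro bounded_linear.continuous_on[OF inner])
  qed
qed

lemma smooth_form_has_derivative:
  "smooth_form \<omega> \<Longrightarrow> ((\<lambda>q. \<omega> q S) has_derivative frechet_derivative (\<lambda>q. \<omega> q S) (at p)) (at p)"
  by (simp add: smooth_form_def smooth_has_derivative)

lemma smooth_form_pd: "smooth_form \<omega> \<Longrightarrow> smooth_form (pd a \<omega>)"
  by (simp add: smooth_form_def pd_def smooth_frechet_derivative)

lemma pd_pd_commute: "smooth_form \<omega> \<Longrightarrow> pd b (pd a \<omega>) p S = pd a (pd b \<omega>) p S"
  by (simp add: pd_def smooth_form_def smooth_second_derivative_symmetric)

lemma bilinear_matrix_mult: "bilinear ((**) :: real^'n^'m \<Rightarrow> real^'p^'n \<Rightarrow> real^'p^'m)"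
  unfolding bilinear_def
  by (auto intro!: linearI simp: matrix_matrix_mult_def vec_eq_iff sum.distrib sum_distrib_left algebra_simps)

lemma bilinear_gbr: "bilinear gbr"
proof -
  have mm: "bilinear ((**) :: gmat \<Rightarrow> gmat \<Rightarrow> gmat)"
    by (rule bilinear_matrix_mult)
  show ?thesis
    unfolding bilinear_def gbr_def
    by (auto intro!: linearI simp: bilinear_ladd[OF mm] bilinear_radd[OF mm] bilinear_lmul[OF mm]
        bilinear_rmul[OF mm] scaleR_diff_right)
qed

interpretation gbr: bounded_bilinear gbr
  using bilinear_gbr by (rule bilinear_conv_bounded_bilinear[THEN iffD1])

lemma linear_gbr_right: "linear (gbr X)"
  by (rule bounded_linear.linear[OF gbr.bounded_linear_right])

lemma gbr_antisym: "gbr X Y = - gbr Y X"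
  by (simp add: gbr_def)

lemma gbr_self: "gbr X X = 0"
  by (simp add: gbr_def)

lemma gbr_jacobi: "gbr (gbr X Y) Z = gbr X (gbr Y Z) - gbr Y (gbr X Z)"
proof -
  have mm: "bilinear ((**) :: gmat \<Rightarrow> gmat \<Rightarrow> gmat)"
    by (rule bilinear_matrix_mult)
  show ?thesis
    unfolding gbr_def by (simp add: bilinear_lsub[OF mm] bilinear_rsub[OF mm] matrix_mul_assoc)
qed

lemma all_iq: "(\<forall>r::iq. P r) \<longleftrightarrow> P Q1 \<and> P Q2 \<and> P Q3 \<and> P Q4"
  by (metis iq.exhaust)

lemma gbr_quaternion_units: "gbr gi gj = 2 *\<^sub>R gk" "gbr gj gk = 2 *\<^sub>R gi" "gbr gk gi = 2 *\<^sub>R gj"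
  by (simp_all add: vec_eq_iff all_iq gbr_def gi_def gj_def gk_def op_mat_def basis_q_def axis_def
      matrix_matrix_mult_def UNIV_iq)

definition g_elem :: "real \<Rightarrow> real \<Rightarrow> real \<Rightarrow> gmat" where
  "g_elem x y z = x *\<^sub>R gi + y *\<^sub>R gj + z *\<^sub>R gk"

lemma g_elem_cong: "x = x' \<Longrightarrow> y = y' \<Longrightarrow> z = z' \<Longrightarrow> g_elem x y z = g_elem x' y' z'"
  by simp

lemma g_elem_add: "g_elem x y z + g_elem x' y' z' = g_elem (x + x') (y + y') (z + z')"
  by (simp add: g_elem_def algebra_simps)

lemma g_elem_diff: "g_elem x y z - g_elem x' y' z' = g_elem (x - x') (y - y') (z - z')"
  by (simp add: g_elem_def algebra_simps)

lemma g_elem_scaleR: "c *\<^sub>R g_elem x y z = g_elem (c * x) (c * y) (c * z)"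
  by (simp add: g_elem_def algebra_simps)

lemma gbr_g_elem:
  "gbr (g_elem x y z) (g_elem x' y' z')
     = g_elem (2 * (y * z' - z * y')) (2 * (z * x' - x * z')) (2 * (x * y' - y * x'))"
  by (simp add: g_elem_def gbr.add_left gbr.add_right gbr.scaleR_left gbr.scaleR_right
      gbr_quaternion_units gbr_antisym[of gj gi] gbr_antisym[of gk gj] gbr_antisym[of gi gk]
      gbr_self algebra_simps)

lemma has_derivative_swedge:
  assumes "\<And>S. ((\<lambda>q. \<omega> q S) has_derivative \<omega>' S) F"
  shows "((\<lambda>q. swedge \<alpha> (\<omega> q) U) has_derivative (\<lambda>v. swedge \<alpha> (\<lambda>S. \<omega>' S v) U)) F"
  unfolding swedge_def wedge_with_def
  by (intro has_derivative_sum has_derivative_scaleR_right assms)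

lemma has_derivative_star:
  assumes "\<And>S. ((\<lambda>q. \<omega> q S) has_derivative \<omega>' S) F"
  shows "((\<lambda>q. star (\<omega> q) U) has_derivative (\<lambda>v. star (\<lambda>S. \<omega>' S v) U)) F"
  unfolding star_def by (intro has_derivative_scaleR_right assms)

lemma has_derivative_intprod:
  assumes "\<And>S. ((\<lambda>q. \<omega> q S) has_derivative \<omega>' S) F"
  shows "((\<lambda>q. intprod a (\<omega> q) T) has_derivative (\<lambda>v. intprod a (\<lambda>S. \<omega>' S v) T)) F"
  unfolding intprod_def by (cases "a \<in> T") (simp_all add: has_derivative_scaleR_right assms)

lemma lambda2_plus_has_derivative:
  fixes \<omega> :: "'a::real_normed_vector \<Rightarrow> ix set \<Rightarrow> 'v::real_normed_vector"
  assumes L: "\<And>q. lambda2_plus (\<omega> q)"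
    and d: "\<And>S. ((\<lambda>q. \<omega> q S) has_derivative \<omega>' S) (at p)"
  shows "lambda2_plus (\<lambda>S. \<omega>' S v)"
proof -
  have "\<omega>' U = (\<lambda>v. 0)" if "card U \<noteq> 2" for U
  proof -
    have "(\<lambda>q. \<omega> q U) = (\<lambda>q. 0)"
      using L that by (auto simp: lambda2_plus_def is_two_form_def)
    then show ?thesis
      using d[of U] has_derivative_unique[OF _ has_derivative_const] by metis
  qed
  moreover have "3 *\<^sub>R \<omega>' U v - star (swedge Omega (\<lambda>S. \<omega>' S v)) U = 0" for U
  proof -
    have "((\<lambda>q. 3 *\<^sub>R \<omega> q U - star (swedge Omega (\<omega> q)) U) has_derivative
        (\<lambda>v. 3 *\<^sub>R \<omega>' U v - star (swedge Omega (\<lambda>S. \<omega>' S v)) U)) (at p)"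
      by (intro has_derivative_diff has_derivative_scaleR_right d has_derivative_star has_derivative_swedge)
    moreover have "(\<lambda>q. 3 *\<^sub>R \<omega> q U - star (swedge Omega (\<omega> q)) U) = (\<lambda>q. 0)"
      using L by (auto simp: lambda2_plus_def)
    ultimately show ?thesis
      using has_derivative_unique[OF _ has_derivative_const] by metis
  qed
  ultimately show ?thesis
    by (simp add: lambda2_plus_def is_two_form_def)
qed

lemma Bform_singleton: "Bform \<epsilon> p {a} = Bc \<epsilon> p a"
  by (simp add: Bform_def)

lemma wedge_with_Bform:
  "wedge_with gbr (Bform \<epsilon> p) w U = (\<Sum>b\<in>U. sgn {b} (U - {b}) *\<^sub>R gbr (Bc \<epsilon> p b) (w (U - {b})))"
proof -
  have "wedge_with gbr (Bform \<epsilon> p) w U = (\<Sum>S\<in>Pow U.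
      if \<exists>a. S = {a} then sgn S (U - S) *\<^sub>R gbr (Bc \<epsilon> p (the_elem S)) (w (U - S)) else 0)"
    unfolding wedge_with_def Bform_def by (intro sum.cong) (auto simp: gbr.zero_left)
  also have "\<dots> = (\<Sum>S\<in>(\<lambda>b. {b}) ` U. sgn S (U - S) *\<^sub>R gbr (Bc \<epsilon> p (the_elem S)) (w (U - S)))"
    by (rule sum.mono_neutral_cong_right) auto
  finally show ?thesis
    by (simp add: sum.reindex)
qed

lemma DB_eq_sum_cov: "DB \<epsilon> \<omega> p U = (\<Sum>b\<in>UNIV. swedge (ev b) (cov b \<epsilon> \<omega> p) U)"
  by (simp add: DB_def dform_def wedge_with_Bform swedge_ev cov_def sum.If_cases sum.distrib
      scaleR_add_right)

lemma eval2_FB: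
  assumes "a \<noteq> b"
  shows "eval2 (FB \<epsilon> p) b a = pd b (Bform \<epsilon>) p {a} - pd a (Bform \<epsilon>) p {b} + gbr (Bc \<epsilon> p b) (Bc \<epsilon> p a)"
proof -
  have "{b, a} - {b} = {a}" "{b, a} - {a} = {b}" using assms by auto
  moreover have "sgn {b} {a} * sgn {b} {a} = 1"
    by (simp add: sgn_singletons)
  ultimately show ?thesis
    using assms sgn_singletons_swap[OF assms] gbr_antisym[of "Bc \<epsilon> p a"]
    by (simp add: eval2_def FB_def dform_def wedge_with_Bform Bform_singleton algebra_simps)
qed

lemma ysq_pos: "\<epsilon> > 0 \<Longrightarrow> \<epsilon>^2 + ysq q > 0"
  unfolding ysq_def by (simp add: add_pos_nonneg)

definition B_i :: "pt \<Rightarrow> ix \<Rightarrow> real" where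
  "B_i v a = (case a of P1 \<Rightarrow> - v$P2 | P2 \<Rightarrow> v$P1 | P3 \<Rightarrow> v$P4 | P4 \<Rightarrow> - v$P3 | _ \<Rightarrow> 0)"

definition B_j :: "pt \<Rightarrow> ix \<Rightarrow> real" where
  "B_j v a = (case a of P1 \<Rightarrow> - v$P3 | P2 \<Rightarrow> - v$P4 | P3 \<Rightarrow> v$P1 | P4 \<Rightarrow> v$P2 | _ \<Rightarrow> 0)"

definition B_k :: "pt \<Rightarrow> ix \<Rightarrow> real" where
  "B_k v a = (case a of P1 \<Rightarrow> - v$P4 | P2 \<Rightarrow> v$P3 | P3 \<Rightarrow> - v$P2 | P4 \<Rightarrow> v$P1 | _ \<Rightarrow> 0)"

definition B_numer :: "pt \<Rightarrow> ix \<Rightarrow> gmat" where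
  "B_numer v a = g_elem (B_i v a) (B_j v a) (B_k v a)"

definition y_inner :: "pt \<Rightarrow> pt \<Rightarrow> real" where
  "y_inner q v = q$P1 * v$P1 + q$P2 * v$P2 + q$P3 * v$P3 + q$P4 * v$P4"

lemma Bc_eq_B_numer: "Bc \<epsilon> q a = (1 / (\<epsilon>^2 + ysq q)) *\<^sub>R B_numer q a"
  by (cases a) (simp_all add: Bc_def B_numer_def g_elem_def B_i_def B_j_def B_k_def)

lemma has_derivative_vec_nth: "((\<lambda>q::pt. q $ i) has_derivative (\<lambda>v. v $ i)) (at q)"
  by (rule bounded_linear.has_derivative[OF bounded_linear_vec_nth has_derivative_ident])

lemma has_derivative_B_numer: "((\<lambda>q. B_numer q a) has_derivative (\<lambda>v. B_numer v a)) (at q)"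
  unfolding B_numer_def g_elem_def B_i_def B_j_def B_k_def
  by (cases a) (auto intro!: derivative_eq_intros has_derivative_vec_nth)

lemma has_derivative_ysq: "(ysq has_derivative (\<lambda>v. 2 * y_inner q v)) (at q)"
  unfolding ysq_def y_inner_def
  by (auto intro!: derivative_eq_intros has_derivative_vec_nth simp: power2_eq_square algebra_simps)

lemma has_derivative_Bc_explicit:
  assumes "\<epsilon> > 0"
  shows "((\<lambda>q. Bc \<epsilon> q a) has_derivative (\<lambda>v. (1 / (\<epsilon>^2 + ysq q)) *\<^sub>R B_numer v a
      - (2 * y_inner q v / (\<epsilon>^2 + ysq q)^2) *\<^sub>R B_numer q a)) (at q)"
proof -
  have "\<epsilon>^2 + ysq q \<noteq> 0" using ysq_pos[OF assms, of q] by linarith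
  then have "((\<lambda>q. 1 / (\<epsilon>^2 + ysq q)) has_derivative (\<lambda>v. - (2 * y_inner q v / (\<epsilon>^2 + ysq q)^2))) (at q)"
    by (auto intro!: derivative_eq_intros has_derivative_ysq simp: power2_eq_square field_simps)
  from has_derivative_scaleR[OF this has_derivative_B_numer[of a q]] show ?thesis
    unfolding Bc_eq_B_numer by (simp add: algebra_simps)
qed

lemma lambda2_plus_cov:
  assumes "\<And>q. lambda2_plus (\<omega> q)" and "\<And>S. (\<lambda>q. \<omega> q S) differentiable at p"
  shows "lambda2_plus (cov a \<epsilon> \<omega> p)"
proof -
  have "((\<lambda>q. \<omega> q S) has_derivative frechet_derivative (\<lambda>q. \<omega> q S) (at p)) (at p)" for S
    using assms(2) by (simp add: frechet_derivative_works)
  then have "lambda2_plus (\<lambda>S. frechet_derivative (\<lambda>q. \<omega> q S) (at p) (axis a 1))"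
    by (rule lambda2_plus_has_derivative[OF assms(1)])
  moreover have "lambda2_plus (\<lambda>S. gbr (Bc \<epsilon> p a) (\<omega> p S))"
    by (rule lambda2_plus_linear_image[OF linear_gbr_right assms(1)])
  moreover have "cov a \<epsilon> \<omega> p
      = (\<lambda>S. frechet_derivative (\<lambda>q. \<omega> q S) (at p) (axis a 1) + gbr (Bc \<epsilon> p a) (\<omega> p S))"
    by (simp add: cov_def pd_def fun_eq_iff)
  ultimately show ?thesis
    by (simp add: lambda2_plus_add)
qed

context
  fixes \<epsilon> :: real and \<phi> :: gform
  assumes eps: "\<epsilon> > 0" and smooth_\<phi>: "smooth_form \<phi>"
begin

lemma has_derivative_Bc: "((\<lambda>q. Bc \<epsilon> q a) has_derivative frechet_derivative (\<lambda>q. Bc \<epsilon> q a) (at p)) (at p)"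
  using differentiableI[OF has_derivative_Bc_explicit[OF eps]] by (simp add: frechet_derivative_works)

lemma has_derivative_cov:
  "((\<lambda>q. cov a \<epsilon> \<phi> q S) has_derivative (\<lambda>v. frechet_derivative (\<lambda>q. pd a \<phi> q S) (at p) v
      + (gbr (Bc \<epsilon> p a) (frechet_derivative (\<lambda>q. \<phi> q S) (at p) v)
         + gbr (frechet_derivative (\<lambda>q. Bc \<epsilon> q a) (at p) v) (\<phi> p S)))) (at p)"
  unfolding cov_def
  by (intro has_derivative_add smooth_form_has_derivative[OF smooth_form_pd[OF smooth_\<phi>]]
      gbr.FDERIV has_derivative_Bc smooth_form_has_derivative[OF smooth_\<phi>])

lemma pd_cov:
  "pd b (cov a \<epsilon> \<phi>) p S
     = pd b (pd a \<phi>) p S + gbr (Bc \<epsilon> p a) (pd b \<phi> p S) + gbr (pd b (Bform \<epsilon>) p {a}) (\<phi> p S)"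
  unfolding pd_def[of b "cov a \<epsilon> \<phi>"] frechet_derivative_at[OF has_derivative_cov, symmetric]
  by (simp add: pd_def Bform_singleton)

text \<open>The Ricci identity: the second derivatives of \<phi> cancel by symmetry, the remaining terms
  combine by the Jacobi identity.\<close>

lemma cov_commutator:
  "cov b \<epsilon> (cov a \<epsilon> \<phi>) p S - cov a \<epsilon> (cov b \<epsilon> \<phi>) p S = gbr (eval2 (FB \<epsilon> p) b a) (\<phi> p S)"
proof (cases "a = b")
  case True
  then show ?thesis by (simp add: eval2_def gbr.zero_left)
next
  case False
  show ?thesis
    unfolding eval2_FB[OF False]
    by (simp add: cov_def[of b \<epsilon> "cov a \<epsilon> \<phi>"] cov_def[of a \<epsilon> "cov b \<epsilon> \<phi>"] pd_cov
        pd_pd_commute[OF smooth_\<phi>, of b a]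
        cov_def[of a \<epsilon> \<phi>] cov_def[of b \<epsilon> \<phi>] gbr.add_left gbr.add_right gbr.diff_left gbr_jacobi
        algebra_simps)
qed

lemma has_derivative_LBstar:
  "((\<lambda>q. LBstar \<epsilon> \<phi> q T) has_derivative
     (\<lambda>v. 2 *\<^sub>R - (\<Sum>a\<in>UNIV.
        intprod a (\<lambda>S. frechet_derivative (\<lambda>q. cov a \<epsilon> \<phi> q S) (at p) v) T))) (at p)"
proof -
  have "((\<lambda>q. cov a \<epsilon> \<phi> q S) has_derivative frechet_derivative (\<lambda>q. cov a \<epsilon> \<phi> q S) (at p)) (at p)" for a S
    using differentiableI[OF has_derivative_cov] by (simp add: frechet_derivative_works)
  then show ?thesis
    unfolding LBstar_def DBstar_def
    by (intro has_derivative_scaleR_right has_derivative_minus has_derivative_sum has_derivative_intprod)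
qed

lemma cov_LBstar:
  "cov b \<epsilon> (LBstar \<epsilon> \<phi>) p T = (-2) *\<^sub>R (\<Sum>a\<in>UNIV. intprod a (cov b \<epsilon> (cov a \<epsilon> \<phi>) p) T)"
proof -
  have "pd b (LBstar \<epsilon> \<phi>) p T = (-2) *\<^sub>R (\<Sum>a\<in>UNIV. intprod a (pd b (cov a \<epsilon> \<phi>) p) T)"
    unfolding pd_def[of b "LBstar \<epsilon> \<phi>"] frechet_derivative_at[OF has_derivative_LBstar, symmetric]
    by (simp add: pd_def[abs_def])
  moreover have "gbr (Bc \<epsilon> p b) (LBstar \<epsilon> \<phi> p T)
      = (-2) *\<^sub>R (\<Sum>a\<in>UNIV. intprod a (\<lambda>S. gbr (Bc \<epsilon> p b) (cov a \<epsilon> \<phi> p S)) T)"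
    by (simp add: LBstar_def DBstar_def gbr.scaleR_right gbr.minus_right gbr.sum_right
        intprod_linear_image[OF linear_gbr_right] scaleR_sum_right sum_negf)
  moreover have "cov b \<epsilon> (cov a \<epsilon> \<phi>) p
      = (\<lambda>S. pd b (cov a \<epsilon> \<phi>) p S + gbr (Bc \<epsilon> p b) (cov a \<epsilon> \<phi> p S))" for a
    by (rule ext) (simp only: cov_def[of b \<epsilon> "cov a \<epsilon> \<phi>"])
  ultimately show ?thesis
    by (simp add: cov_def[of b \<epsilon> "LBstar \<epsilon> \<phi>"] intprod_add sum.distrib scaleR_add_right)
qed

lemma lambda2_plus_cov_cov:
  assumes "\<forall>x. lambda2_plus (\<phi> x)"
  shows "lambda2_plus (cov b \<epsilon> (cov a \<epsilon> \<phi>) p)"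
proof (rule lambda2_plus_cov)
  show "lambda2_plus (cov a \<epsilon> \<phi> q)" for q
  proof (rule lambda2_plus_cov)
    show "lambda2_plus (\<phi> x)" for x
      using assms by blast
    show "(\<lambda>q. \<phi> q S) differentiable at q" for S
      using smooth_form_has_derivative[OF smooth_\<phi>] by (rule differentiableI)
  qed
  show "(\<lambda>q. cov a \<epsilon> \<phi> q S) differentiable at p" for S
    using has_derivative_cov by (rule differentiableI)
qed

lemma LB_LBstar_eq:
  "LB \<epsilon> (LBstar \<epsilon> \<phi>) p U
     = (-4) *\<^sub>R (\<Sum>b\<in>UNIV. \<Sum>a\<in>UNIV. proj_plus (wedge_int b a (cov b \<epsilon> (cov a \<epsilon> \<phi>) p)) U)"
proof -
  have "cov b \<epsilon> (LBstar \<epsilon> \<phi>) p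
      = (\<lambda>T. (-2) *\<^sub>R (\<Sum>a\<in>UNIV. intprod a (cov b \<epsilon> (cov a \<epsilon> \<phi>) p) T))" for b
    by (rule ext) (rule cov_LBstar)
  then have "DB \<epsilon> (LBstar \<epsilon> \<phi>) p
      = (\<lambda>V. (-2) *\<^sub>R (\<Sum>b\<in>UNIV. \<Sum>a\<in>UNIV. wedge_int b a (cov b \<epsilon> (cov a \<epsilon> \<phi>) p) V))"
    by (intro ext) (simp only: DB_eq_sum_cov swedge_scaleR_right swedge_sum_right wedge_int_def
        scaleR_sum_right)
  then show ?thesis
    unfolding LB_def Pplus_eq_proj_plus by (simp only: proj_plus_scaleR proj_plus_sum scaleR_scaleR) simp
qed

end

section \<open>The curvature of B\<close>

text \<open>(\<epsilon>^2 + |y|^2)^2 F_B(e_b, e_a), computed from B = B_numer / (\<epsilon>^2 + |y|^2): everything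
  except \<epsilon>^2 times the instanton form cancels.\<close>

lemma instanton_numerator:
  fixes \<epsilon> :: real and p :: pt
  assumes "a \<noteq> b"
  defines "D \<equiv> \<epsilon>^2 + ysq p"
  shows "D *\<^sub>R (B_numer (axis b 1) a - B_numer (axis a 1) b)
      - (2 * y_inner p (axis b 1)) *\<^sub>R B_numer p a + (2 * y_inner p (axis a 1)) *\<^sub>R B_numer p b
      + gbr (B_numer p b) (B_numer p a)
    = \<epsilon>^2 *\<^sub>R g_elem (instanton_i b a) (instanton_j b a) (instanton_k b a)"
  using assms unfolding B_numer_def
  by (simp add: gbr_g_elem g_elem_add g_elem_diff g_elem_scaleR, intro g_elem_cong;
      cases a; cases b; simp add: B_i_def B_j_def B_k_def y_inner_def axis_def ysq_def
      instanton_i_def instanton_j_def instanton_k_def algebra_simps power2_eq_square)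

lemma eval2_FB_instanton:
  assumes "\<epsilon> > 0"
  shows "eval2 (FB \<epsilon> p) b a
       = (\<epsilon>^2 / (\<epsilon>^2 + ysq p)^2) *\<^sub>R g_elem (instanton_i b a) (instanton_j b a) (instanton_k b a)"
proof (cases "a = b")
  case True
  then show ?thesis
    by (cases b) (simp_all add: eval2_def instanton_i_def instanton_j_def instanton_k_def g_elem_def)
next
  case False
  define D where "D = \<epsilon>^2 + ysq p"
  have "D > 0" using ysq_pos[OF assms] by (simp add: D_def)
  have pd_Bform: "pd c (Bform \<epsilon>) p {d}
      = (1 / D) *\<^sub>R B_numer (axis c 1) d - (2 * y_inner p (axis c 1) / D^2) *\<^sub>R B_numer p d" for c d
    by (simp add: pd_def Bform_singleton D_def
        frechet_derivative_at[OF has_derivative_Bc_explicit[OF assms], symmetric])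
  have "eval2 (FB \<epsilon> p) b a = (1 / D^2) *\<^sub>R (D *\<^sub>R (B_numer (axis b 1) a - B_numer (axis a 1) b)
      - (2 * y_inner p (axis b 1)) *\<^sub>R B_numer p a + (2 * y_inner p (axis a 1)) *\<^sub>R B_numer p b
      + gbr (B_numer p b) (B_numer p a))"
    using \<open>D > 0\<close>
    by (simp add: eval2_FB[OF False] pd_Bform Bc_eq_B_numer D_def[symmetric] gbr.scaleR_left gbr.scaleR_right
        scaleR_diff_right scaleR_add_right power2_eq_square) (simp add: D_def power2_eq_square)
  also have "\<dots> = (\<epsilon>^2 / D^2) *\<^sub>R g_elem (instanton_i b a) (instanton_j b a) (instanton_k b a)"
    by (simp add: instanton_numerator[OF False, where \<epsilon> = \<epsilon> and p = p, folded D_def])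
  finally show ?thesis
    by (simp add: D_def)
qed

lemma eval2_FB_eq_0:
  assumes "\<epsilon> > 0" and "b \<notin> Pperp \<or> a \<notin> Pperp"
  shows "eval2 (FB \<epsilon> p) b a = 0"
  using assms(2)
  by (auto simp: eval2_FB_instanton[OF assms(1)] Pperp_def instanton_i_def instanton_j_def instanton_k_def
      g_elem_def)

lemma sum_wedge_int_gbr_FB:
  assumes "\<epsilon> > 0"
  shows "(\<Sum>b\<in>UNIV. \<Sum>a\<in>UNIV. wedge_int b a (\<lambda>S. gbr (eval2 (FB \<epsilon> p) b a) (\<psi> S)) V)
      = (\<epsilon>^2 / (\<epsilon>^2 + ysq p)^2) *\<^sub>R (gbr gi (rot_action instanton_i \<psi> V)
          + gbr gj (rot_action instanton_j \<psi> V) + gbr gk (rot_action instanton_k \<psi> V))"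
proof -
  define c where "c = \<epsilon>^2 / (\<epsilon>^2 + ysq p)^2"
  have "(\<lambda>S. gbr (eval2 (FB \<epsilon> p) b a) (\<psi> S)) = (\<lambda>S. c *\<^sub>R (instanton_i b a *\<^sub>R gbr gi (\<psi> S)
      + instanton_j b a *\<^sub>R gbr gj (\<psi> S) + instanton_k b a *\<^sub>R gbr gk (\<psi> S)))" for a b
    by (simp add: eval2_FB_instanton[OF assms] c_def g_elem_def gbr.add_left gbr.scaleR_left)
  then have "wedge_int b a (\<lambda>S. gbr (eval2 (FB \<epsilon> p) b a) (\<psi> S)) V
      = c *\<^sub>R (instanton_i b a *\<^sub>R gbr gi (wedge_int b a \<psi> V) + instanton_j b a *\<^sub>R gbr gj (wedge_int b a \<psi> V)
          + instanton_k b a *\<^sub>R gbr gk (wedge_int b a \<psi> V))" for a b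
    by (simp add: wedge_int_add wedge_int_scaleR wedge_int_linear_image[OF linear_gbr_right])
  then show ?thesis
    by (simp add: c_def[symmetric] rot_action_def gbr.sum_right gbr.scaleR_right scaleR_sum_right
        scaleR_add_right sum.distrib)
qed

lemma sum_UNIV_eq_sum_Pperp:
  assumes "\<And>a b. b \<notin> Pperp \<or> a \<notin> Pperp \<Longrightarrow> f b a = 0"
  shows "(\<Sum>b\<in>UNIV. \<Sum>a\<in>UNIV. f b a) = (\<Sum>b\<in>Pperp. \<Sum>a\<in>Pperp. f b a)"
proof -
  have "(\<Sum>b\<in>UNIV. \<Sum>a\<in>UNIV. f b a) = (\<Sum>b\<in>Pperp. \<Sum>a\<in>UNIV. f b a)"
    by (rule sum.mono_neutral_right) (auto simp: assms)
  also have "\<dots> = (\<Sum>b\<in>Pperp. \<Sum>a\<in>Pperp. f b a)"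
    by (intro sum.cong refl sum.mono_neutral_right) (auto simp: assms)
  finally show ?thesis .
qed

lemma curvature_term:
  fixes \<psi> :: "ix set \<Rightarrow> gmat"
  assumes "\<epsilon> > 0" and "lambda2_plus \<psi>"
  shows "proj_plus (\<lambda>V. \<Sum>b\<in>UNIV. \<Sum>a\<in>UNIV. wedge_int b a (\<lambda>S. gbr (eval2 (FB \<epsilon> p) b a) (\<psi> S)) V) U
       = (\<Sum>k\<in>Pperp. \<Sum>l\<in>Pperp. swedge (ev k) (\<lambda>T. gbr (eval2 (FB \<epsilon> p) k l) (intprod l \<psi> T)) U)"
proof -
  have "proj_plus (\<lambda>V. \<Sum>b\<in>UNIV. \<Sum>a\<in>UNIV. wedge_int b a (\<lambda>S. gbr (eval2 (FB \<epsilon> p) b a) (\<psi> S)) V) U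
      = (\<Sum>b\<in>UNIV. \<Sum>a\<in>UNIV. wedge_int b a (\<lambda>S. gbr (eval2 (FB \<epsilon> p) b a) (\<psi> S)) U)"
    unfolding sum_wedge_int_gbr_FB[OF assms(1)]
    by (simp add: proj_plus_scaleR proj_plus_add proj_plus_linear_image[OF linear_gbr_right, symmetric]
        proj_plus_rot_action_instanton[OF assms(2)])
  also have "\<dots> = (\<Sum>b\<in>Pperp. \<Sum>a\<in>Pperp. wedge_int b a (\<lambda>S. gbr (eval2 (FB \<epsilon> p) b a) (\<psi> S)) U)"
    by (rule sum_UNIV_eq_sum_Pperp)
      (simp add: eval2_FB_eq_0[OF assms(1)] gbr.zero_left wedge_int_def swedge_ev intprod_def)
  finally show ?thesis
    by (simp add: wedge_int_def intprod_linear_image[OF linear_gbr_right])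
qed

theorem proposition2p3:
  fixes \<epsilon> :: real and \<phi> :: gform and p :: pt and U :: "ix set"
  assumes "\<epsilon> > 0"
    and "smooth_form \<phi>"
    and "g_valued \<phi>"
    and "\<forall>x. in_Lambda2plus (\<phi> x)"
  shows "LB \<epsilon> (LBstar \<epsilon> \<phi>) p U =
           rough_lap \<epsilon> \<phi> p U
           - 2 *\<^sub>R (\<Sum>k\<in>Pperp. \<Sum>l\<in>Pperp.
                 swedge (ev k) (\<lambda>T. gbr (eval2 (FB \<epsilon> p) k l) (intprod l (\<phi> p) T)) U)"
proof -
  note eps = assms(1) and smooth_\<phi> = assms(2)
  have \<Lambda>: "\<forall>x. lambda2_plus (\<phi> x)"
    using assms(4) by (simp add: in_Lambda2plus_iff)
  define T where "T a b = cov b \<epsilon> (cov a \<epsilon> \<phi>) p" for a b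
  have "LB \<epsilon> (LBstar \<epsilon> \<phi>) p U = (-4) *\<^sub>R (\<Sum>b\<in>UNIV. \<Sum>a\<in>UNIV. proj_plus (wedge_int b a (T a b)) U)"
    unfolding T_def by (rule LB_LBstar_eq[OF eps smooth_\<phi>])
  also have "\<dots> = (-4) *\<^sub>R ((1/4) *\<^sub>R (\<Sum>b\<in>UNIV. T b b U) + (1/2) *\<^sub>R
      proj_plus (\<lambda>V. \<Sum>b\<in>UNIV. \<Sum>a\<in>UNIV. wedge_int b a (\<lambda>S. gbr (eval2 (FB \<epsilon> p) b a) (\<phi> p S)) V) U)"
    using sum_proj_plus_wedge_int[of T U] lambda2_plus_cov_cov[OF eps smooth_\<phi> \<Lambda>]
      cov_commutator[OF eps smooth_\<phi>]
    by (simp add: T_def)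
  also have "\<dots> = rough_lap \<epsilon> \<phi> p U
      - 2 *\<^sub>R (\<Sum>k\<in>Pperp. \<Sum>l\<in>Pperp. swedge (ev k) (\<lambda>T. gbr (eval2 (FB \<epsilon> p) k l) (intprod l (\<phi> p) T)) U)"
    using curvature_term[OF eps \<Lambda>[rule_format]]
    by (simp add: rough_lap_def T_def algebra_simps)
  finally show ?thesis .
qed

end
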